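(* Let $n$ be a positive integer and let $\mathcal{P}$ be a nonzero linear partial difference operator with constant coefficients acting on functions $f:\mathbb{Z}^n\to\mathbb{C}$, i.e. $\mathcal{P} f(m_1,\dots,m_n)=\sum_{\alpha\in A} c_\alpha f(m_1+\alpha_1,\dots,m_n+\alpha_n)$ for a finite set $A\subset\mathbb{Z}^n$ and complex constants $c_\alpha$. Then there exists a function $f:\mathbb{Z}^n\to\mathbb{C}$ such that $\mathcal{P} f(m_1,\dots,m_n)=\delta(m_1,\dots,m_n)$ for all $(m_1,\dots,m_n)\in\mathbb{Z}^n$, where $\delta(m_1,\dots,m_n)=1$ if $(m_1,\dots,m_n)=(0,\dots,0)$ and $\delta(m_1,\dots,m_n)=0$ otherwise.
   Context: The operator $\mathcal{P}$ is called nonzero if it is not the zero operator, equivalently if its symbol, the Laurent polynomial $P(z_1,\dots,z_n)=\sum_{\alpha\in A}c_\alpha z_1^{\alpha_1}\cdots z_n^{\alpha_n}$, is not the zero Laurent polynomial. The paper remarks that the complex numbers may be replaced by any field. *)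

theory Defs
  imports "HOL-Analysis.Analysis"
begin

definition diff_op :: "(int ^ 'n) set \<Rightarrow> (int ^ 'n \<Rightarrow> complex) \<Rightarrow> (int ^ 'n \<Rightarrow> complex) \<Rightarrow> int ^ 'n \<Rightarrow> complex"
  where "diff_op A c f m = (\<Sum>\<alpha>\<in>A. c \<alpha> * f (m + \<alpha>))"

text \<open>Symbol nonzero: some coefficient on A is nonzero (exponents in A are distinct).\<close>
definition nonzero_op :: "(int ^ 'n) set \<Rightarrow> (int ^ 'n \<Rightarrow> complex) \<Rightarrow> bool"
  where "nonzero_op A c \<longleftrightarrow> (\<exists>\<alpha>\<in>A. c \<alpha> \<noteq> 0)"

definition delta :: "int ^ 'n \<Rightarrow> complex"
  where "delta m = (if m = 0 then 1 else 0)"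

end

theory Submission
  imports Defs "HOL-Computational_Algebra.Polynomial"
begin

text \<open>Pick an integer weight vector \<open>w\<close> that separates the finitely many shifts \<open>\<alpha>\<close> with
  \<open>c \<alpha> \<noteq> 0\<close>; such a \<open>w\<close> exists because \<open>w = (1, t, t\<^sup>2, \<dots>)\<close> fails only for the finitely
  many roots \<open>t\<close> of the nonzero polynomials \<open>\<Sum>\<^sub>i d\<^sub>i X\<^sup>i\<close>, \<open>d\<close> a difference of shifts.
  Let \<open>b\<close> be the shift of largest weight. The equation at \<open>m\<close> then expresses \<open>f (m + b)\<close>
  through values of \<open>f\<close> at points of strictly smaller weight, so setting \<open>f = 0\<close> below
  weight \<open>\<langle>w, b\<rangle>\<close> and solving upwards defines a fundamental solution.\<close>

definition int_dot :: "int ^ 'n \<Rightarrow> int ^ 'n \<Rightarrow> int" where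
  "int_dot w k = (\<Sum>i\<in>UNIV. w $ i * k $ i)"

lemma int_dot_add: "int_dot w (a + b) = int_dot w a + int_dot w b"
  by (simp add: int_dot_def distrib_left sum.distrib)

lemma int_dot_diff: "int_dot w (a - b) = int_dot w a - int_dot w b"
  by (simp add: int_dot_def right_diff_distrib sum_subtractf)

lemma int_dot_zero [simp]: "int_dot w 0 = 0"
  by (simp add: int_dot_def)

definition vec_poly :: "int ^ 'n \<Rightarrow> int poly" where
  "vec_poly d = (\<Sum>i\<in>UNIV. monom (d $ i) (to_nat i))"

lemma coeff_vec_poly: "coeff (vec_poly d) (to_nat j) = d $ j"
proof -
  have "coeff (vec_poly d) (to_nat j) = (\<Sum>i\<in>UNIV. if i = j then d $ i else 0)"
    by (auto simp: vec_poly_def coeff_sum coeff_monom intro: sum.cong)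
  then show ?thesis by simp
qed

lemma vec_poly_eq_0_iff: "vec_poly d = 0 \<longleftrightarrow> d = 0"
proof
  assume "vec_poly d = 0"
  then show "d = 0"
    using coeff_vec_poly[of d] by (simp add: vec_eq_iff)
qed (simp add: vec_poly_def)

lemma poly_vec_poly: "poly (vec_poly d) t = int_dot (\<chi> i. t ^ to_nat i) d"
  by (simp add: vec_poly_def poly_sum poly_monom int_dot_def mult.commute)

lemma exists_separating_weight:
  fixes S :: "(int ^ 'n) set"
  assumes "finite S"
  shows "\<exists>w. inj_on (int_dot w) S"
proof -
  define D where "D = (\<lambda>(a, b). a - b) ` (S \<times> S) - {0}"
  have "finite D"
    using assms by (simp add: D_def)
  then have "finite (\<Union>d\<in>D. {t. poly (vec_poly d) t = 0})"
    by (auto simp: D_def vec_poly_eq_0_iff intro: poly_roots_finite)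
  then obtain t :: int where t: "\<And>d. d \<in> D \<Longrightarrow> poly (vec_poly d) t \<noteq> 0"
    using ex_new_if_finite[OF infinite_UNIV_int] by blast
  have "inj_on (int_dot (\<chi> i. t ^ to_nat i)) S"
  proof (rule inj_onI, rule ccontr)
    fix a b
    assume "a \<in> S" "b \<in> S" and "a \<noteq> b"
      and "int_dot (\<chi> i. t ^ to_nat i) a = int_dot (\<chi> i. t ^ to_nat i) b"
    then have "a - b \<in> D" and "poly (vec_poly (a - b)) t = 0"
      by (force simp: D_def, simp add: poly_vec_poly int_dot_diff)
    with t show False by blast
  qed
  then show ?thesis by blast
qed

lemma exists_strict_arg_max:
  fixes f :: "'a \<Rightarrow> 'b :: linorder"
  assumes "finite S" and "S \<noteq> {}" and "inj_on f S"
  shows "\<exists>b\<in>S. \<forall>\<beta>\<in>S - {b}. f \<beta> < f b"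
proof -
  have "Max (f ` S) \<in> f ` S"
    using assms(1,2) by simp
  then obtain b where b: "b \<in> S" "f b = Max (f ` S)"
    by auto
  have "f \<beta> < f b" if "\<beta> \<in> S - {b}" for \<beta>
  proof -
    have "f \<beta> \<le> f b"
      using that b(2) assms(1) by simp
    moreover have "f \<beta> \<noteq> f b"
      using that b(1) assms(3) by (auto dest: inj_onD)
    ultimately show ?thesis by simp
  qed
  with b(1) show ?thesis by blast
qed

text \<open>The value at \<open>k\<close> is read off the equation at \<open>k - b\<close>; only shifts of weight below
  \<open>\<langle>w, b\<rangle>\<close> enter the recursion, which makes it terminate.\<close>

function triangular_solution ::
    "int ^ 'n \<Rightarrow> (int ^ 'n) set \<Rightarrow> (int ^ 'n \<Rightarrow> complex) \<Rightarrow> int ^ 'n \<Rightarrow> int ^ 'n \<Rightarrow> complex" where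
  "triangular_solution w S c b k =
    (if int_dot w k < int_dot w b then 0
     else (delta (k - b) - (\<Sum>\<beta>\<in>{\<beta>\<in>S. int_dot w \<beta> < int_dot w b}.
             c \<beta> * triangular_solution w S c b (k - b + \<beta>))) / c b)"
  by pat_completeness auto
termination
  by (relation "Wellfounded.measure (\<lambda>(w, S, c, b, k). nat (int_dot w k - int_dot w b + 1))")
     (auto simp: int_dot_add int_dot_diff)

declare triangular_solution.simps [simp del]

lemma triangular_solution_solves:
  fixes S :: "(int ^ 'n) set" and c :: "int ^ 'n \<Rightarrow> complex"
  assumes "finite S" and "b \<in> S" and "c b \<noteq> 0"
    and lower: "\<And>\<beta>. \<beta> \<in> S - {b} \<Longrightarrow> int_dot w \<beta> < int_dot w b"
  defines "f \<equiv> triangular_solution w S c b"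
  shows "(\<Sum>\<alpha>\<in>S. c \<alpha> * f (m + \<alpha>)) = delta m"
proof -
  have lower_eq: "{\<beta>\<in>S. int_dot w \<beta> < int_dot w b} = S - {b}"
    using lower by auto
  have "(\<Sum>\<alpha>\<in>S. c \<alpha> * f (m + \<alpha>)) = c b * f (m + b) + (\<Sum>\<alpha>\<in>S - {b}. c \<alpha> * f (m + \<alpha>))"
    using assms(1,2) by (simp add: sum.remove)
  also have "\<dots> = delta m"
  proof (cases "int_dot w m < 0")
    case True
    have "f (m + \<alpha>) = 0" if "\<alpha> \<in> S" for \<alpha>
    proof -
      have "int_dot w (m + \<alpha>) < int_dot w b"
        using True lower[of \<alpha>] that by (cases "\<alpha> = b") (auto simp: int_dot_add)
      then show ?thesis
        unfolding f_def by (subst triangular_solution.simps) simp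
    qed
    moreover have "m \<noteq> 0"
      using True by auto
    ultimately show ?thesis
      using assms(2) by (simp add: delta_def)
  next
    case False
    then have "f (m + b) = (delta m - (\<Sum>\<beta>\<in>S - {b}. c \<beta> * f (m + \<beta>))) / c b"
      unfolding f_def lower_eq[symmetric]
      by (subst triangular_solution.simps) (simp add: int_dot_add)
    then show ?thesis
      using assms(3) by simp
  qed
  finally show ?thesis .
qed

lemma diff_op_restrict_support:
  assumes "finite A"
  shows "diff_op A c f m = (\<Sum>\<alpha>\<in>{\<alpha>\<in>A. c \<alpha> \<noteq> 0}. c \<alpha> * f (m + \<alpha>))"
  unfolding diff_op_def by (rule sum.mono_neutral_right[OF assms]) auto

theorem mainTheorem1:
  fixes A :: "(int ^ 'n) set" and c :: "int ^ 'n \<Rightarrow> complex"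
  assumes "finite A" and "nonzero_op A c"
  shows "\<exists>f :: int ^ 'n \<Rightarrow> complex. \<forall>m. diff_op A c f m = delta m"
proof -
  define S where "S = {\<alpha>\<in>A. c \<alpha> \<noteq> 0}"
  have "finite S" and "S \<noteq> {}"
    using assms by (auto simp: S_def nonzero_op_def)
  obtain w where "inj_on (int_dot w) S"
    using exists_separating_weight[OF \<open>finite S\<close>] by blast
  then obtain b where "b \<in> S" and lower: "\<forall>\<beta>\<in>S - {b}. int_dot w \<beta> < int_dot w b"
    using exists_strict_arg_max[OF \<open>finite S\<close> \<open>S \<noteq> {}\<close>] by blast
  have "c b \<noteq> 0"
    using \<open>b \<in> S\<close> by (simp add: S_def)
  have "diff_op A c (triangular_solution w S c b) m = delta m" for m
    using triangular_solution_solves[where S = S and c = c and w = w,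
        OF \<open>finite S\<close> \<open>b \<in> S\<close> \<open>c b \<noteq> 0\<close>] lower
    by (simp add: diff_op_restrict_support[OF assms(1)] flip: S_def)
  then show ?thesis by blast
qed

end
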